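(* Let $r\in\mathbb{N}$ and $v\in\mathbb{YF}^r$. Then $$d_r(\varepsilon,v)=d_1(\varepsilon,s(v))\cdot r^{d(v)}=r^{d(v)}\prod_{j=1}^{d(v)}g(v,j).$$
   Context: Fix $r\in\mathbb{N}$. Words and statistics. Consider finite words over $\{1_1,\dots,1_r,2\}$. A letter $1_i$ is a one with digit value $1$; $2$ is a two with digit value $2$. $\varepsilon$ is the empty word. $|x|$ is the sum of digit values, $d(x)$ the number of twos. The graph $\mathbb{YF}^r$. It is the graded graph on all finite words, graded by $|\cdot|$. From $x$ there is a downward edge to every word obtained by one of two operations: (i) delete the leftmost one; (ii) replace a $2$ lying left of the leftmost one (any $2$ if there are no ones) by $1_i$, with arbitrary $i\in\{1,\dots,r\}$. For $r=1$ write $1$ for $1_1$; $\mathbb{YF}=\mathbb{YF}^1$. The map $s:\mathbb{YF}^r\to\mathbb{YF}$ replaces every $1_i$ by $1$. Path counts. $d_r(x,y)$ is the number of downward paths $y=y_n\to\dots\to y_m=x$ in $\mathbb{YF}^r$ with $|y_i|=i$; $d_1$ is the count in $\mathbb{YF}$. The function $g$. Write $x=2\,1^{\beta_m}\,2\cdots2\,1^{\beta_1}\,2\,1^{\beta_0}$ (possibly preceded by a block of ones), where $1^{\beta}$ is a possibly empty block of $\beta$ consecutive ones. For $1\le j\le d(x)$ set $g(x,j)=\beta_0+\dots+\beta_{j-1}+2j-1$. *)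

theory Defs
  imports Main
begin

text \<open>Letters: One i stands for the one 1_i, Two for the two. Words are lists, read left to right.\<close>
datatype letter = One nat | Two

fun dval :: "letter \<Rightarrow> nat" where
  "dval (One i) = 1"
| "dval Two = 2"

definition rank :: "letter list \<Rightarrow> nat" where
  "rank x = sum_list (map dval x)"

definition ntwo :: "letter list \<Rightarrow> nat" where
  "ntwo x = length (filter (\<lambda>a. a = Two) x)"

definition valid :: "nat \<Rightarrow> letter list \<Rightarrow> bool" where
  "valid r x \<longleftrightarrow> (\<forall>i. One i \<in> set x \<longrightarrow> 1 \<le> i \<and> i \<le> r)"

definition edge :: "nat \<Rightarrow> letter list \<Rightarrow> letter list \<Rightarrow> bool" where
  "edge r y x \<longleftrightarrow> valid r y \<and>
     ((\<exists>u i w. y = u @ One i # w \<and> set u \<subseteq> {Two} \<and> x = u @ w) \<or>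
      (\<exists>u w i. y = u @ Two # w \<and> set u \<subseteq> {Two} \<and> 1 \<le> i \<and> i \<le> r \<and> x = u @ One i # w))"

definition dpaths :: "nat \<Rightarrow> letter list \<Rightarrow> letter list \<Rightarrow> nat" where
  "dpaths r x y = card {p. p \<noteq> [] \<and> hd p = y \<and> last p = x \<and> successively (edge r) p \<and>
       (\<forall>k < length p. rank (p ! k) + k = rank y)}"

definition s :: "letter list \<Rightarrow> letter list" where
  "s x = map (\<lambda>a. case a of One i \<Rightarrow> One 1 | Two \<Rightarrow> Two) x"

text \<open>Run lengths of ones of a reversed word: for rev x = 1^b0 2 1^b1 2 ... 2 1^bm 2 1^c
  this yields [b0, b1, ..., bm, c].\<close>
fun blocks :: "letter list \<Rightarrow> nat list" where
  "blocks [] = [0]"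
| "blocks (One i # w) = Suc (hd (blocks w)) # tl (blocks w)"
| "blocks (Two # w) = 0 # blocks w"

text \<open>beta x k = \<beta>_k in x = 2 1^{\<beta>_m} 2 ... 2 1^{\<beta>_1} 2 1^{\<beta>_0}, possibly preceded by ones\<close>
definition beta :: "letter list \<Rightarrow> nat \<Rightarrow> nat" where
  "beta x k = blocks (rev x) ! k"

definition g :: "letter list \<Rightarrow> nat \<Rightarrow> nat" where
  "g x j = (\<Sum>k<j. beta x k) + 2 * j - 1"

end

theory Submission imports Defs begin

text \<open>Edges lower the rank by exactly one, so \<open>d\<^sub>r(\<epsilon>, y)\<close> is the unique solution of
  \<open>d(\<epsilon>, \<epsilon>) = 1\<close> and \<open>d(\<epsilon>, y) = \<Sum> d(\<epsilon>, x)\<close>, summed over the lower covers \<open>x\<close> of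
  \<open>y \<noteq> \<epsilon>\<close>. It therefore suffices to check that \<open>r\<^bsup>d(y)\<^esup>\<close> times the product of the
  hook lengths of \<open>y\<close> (a factor \<open>|w| + 1\<close> for every two in \<open>y = u 2 w\<close>) satisfies this
  recursion. Deleting a leading one changes neither side; the lower covers of \<open>2u\<close> are
  the \<open>r\<close> words \<open>1\<^sub>i u\<close> and the words \<open>2x\<close> with \<open>u \<rightarrow> x\<close>, and since \<open>|x| + 1 = |u|\<close>
  the formula summed over them is \<open>r(1 + |u|)\<close> times its value at \<open>u\<close>. Finally \<open>g(y, j)\<close>
  is the \<open>j\<close>-th hook length counted from the right, and the formula ignores the indices
  of the ones, which gives the reduction to \<open>r = 1\<close>.\<close>

definition down_paths :: "('a \<Rightarrow> 'a \<Rightarrow> bool) \<Rightarrow> 'a \<Rightarrow> 'a \<Rightarrow> 'a list set" where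
  "down_paths E x y = {p. p \<noteq> [] \<and> hd p = y \<and> last p = x \<and> successively E p}"

lemma down_paths_Cons:
  assumes "y \<noteq> x"
  shows "down_paths E x y = (\<Union>z \<in> {z. E y z}. Cons y ` down_paths E x z)"
proof (intro equalityI subsetI)
  fix p assume "p \<in> down_paths E x y"
  with assms obtain z q where "p = y # z # q" "E y z" "z # q \<in> down_paths E x z"
    unfolding down_paths_def by (cases p; cases "tl p") auto
  then show "p \<in> (\<Union>z \<in> {z. E y z}. Cons y ` down_paths E x z)" by blast
next
  fix p assume "p \<in> (\<Union>z \<in> {z. E y z}. Cons y ` down_paths E x z)"
  then obtain z q where "p = y # q" "E y z" "q \<in> down_paths E x z" by blast
  then show "p \<in> down_paths E x y" unfolding down_paths_def by (cases q) auto
qed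

locale graded_relation =
  fixes E :: "'a \<Rightarrow> 'a \<Rightarrow> bool" and rk :: "'a \<Rightarrow> nat"
  assumes rk_step: "E y z \<Longrightarrow> rk y = Suc (rk z)"
    and finite_successors: "finite {z. E y z}"
begin

lemma rk_successively: "successively E p \<Longrightarrow> k < length p \<Longrightarrow> rk (p ! k) + k = rk (hd p)"
  by (induction p arbitrary: k rule: induct_list012) (auto simp: rk_step nth_Cons split: nat.split)

lemma down_paths_refl: "down_paths E x x = {[x]}"
proof -
  have "p = [x]" if "p \<in> down_paths E x x" for p
  proof -
    from that have "rk (last p) + (length p - 1) = rk x"
      using rk_successively[of p "length p - 1"] by (auto simp: down_paths_def last_conv_nth)
    with that show ?thesis by (cases p) (auto simp: down_paths_def)
  qed
  then show ?thesis by (auto simp: down_paths_def)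
qed

lemma finite_down_paths: "finite (down_paths E x y)"
proof (induction "rk y" arbitrary: y rule: less_induct)
  case less
  show ?case
  proof (cases "y = x")
    case True
    then show ?thesis by (simp add: down_paths_refl)
  next
    case False
    have "finite (down_paths E x z)" if "E y z" for z
      using less rk_step[OF that] by simp
    then show ?thesis
      unfolding down_paths_Cons[OF False] by (auto intro: finite_imageI simp: finite_successors)
  qed
qed

lemma card_down_paths_Cons:
  assumes "y \<noteq> x"
  shows "card (down_paths E x y) = (\<Sum>z | E y z. card (down_paths E x z))"
proof -
  have "card (down_paths E x y) = (\<Sum>z | E y z. card (Cons y ` down_paths E x z))"
    unfolding down_paths_Cons[OF assms]
    by (rule card_UN_disjoint)
      (auto simp: finite_successors finite_down_paths, auto simp: down_paths_def)
  also have "\<dots> = (\<Sum>z | E y z. card (down_paths E x z))"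
    by (simp add: card_image)
  finally show ?thesis .
qed

lemma card_down_paths_eqI:
  assumes "P y" and "f x = 1"
    and "\<And>y. P y \<Longrightarrow> y \<noteq> x \<Longrightarrow> f y = (\<Sum>z | E y z. f z)"
    and "\<And>y z. P y \<Longrightarrow> E y z \<Longrightarrow> P z"
  shows "card (down_paths E x y) = f y"
  using assms(1)
proof (induction "rk y" arbitrary: y rule: less_induct)
  case less
  show ?case
  proof (cases "y = x")
    case True
    then show ?thesis using assms(2) by (simp add: down_paths_refl)
  next
    case False
    have "card (down_paths E x y) = (\<Sum>z | E y z. card (down_paths E x z))"
      by (rule card_down_paths_Cons[OF False])
    also have "\<dots> = (\<Sum>z | E y z. f z)"
      using less assms(4) rk_step by (intro sum.cong) auto
    also have "\<dots> = f y"
      using assms(3) less.prems False by simp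
    finally show ?thesis .
  qed
qed

end

lemma rank_Nil [simp]: "rank [] = 0"
  by (simp add: rank_def)

lemma rank_Cons [simp]: "rank (a # u) = dval a + rank u"
  by (simp add: rank_def)

lemma rank_append [simp]: "rank (x @ y) = rank x + rank y"
  by (simp add: rank_def)

lemma ntwo_simps [simp]:
  "ntwo [] = 0" "ntwo (One i # w) = ntwo w" "ntwo (Two # w) = Suc (ntwo w)"
  by (simp_all add: ntwo_def)

lemma ntwo_append [simp]: "ntwo (x @ y) = ntwo x + ntwo y"
  by (simp add: ntwo_def)

lemma valid_simps [simp]:
  "valid r []" "valid r (Two # u) \<longleftrightarrow> valid r u"
  "valid r (One i # u) \<longleftrightarrow> 1 \<le> i \<and> i \<le> r \<and> valid r u"
  by (auto simp: valid_def)

lemma s_simps [simp]: "s [] = []" "s (One i # w) = One 1 # s w" "s (Two # w) = Two # s w"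
  by (simp_all add: s_def)

lemma edge_rank: "edge r y x \<Longrightarrow> rank y = Suc (rank x)"
  by (auto simp: edge_def)

lemma edge_valid: "edge r y x \<Longrightarrow> valid r x"
  by (auto simp: edge_def valid_def)

lemma edge_Nil [simp]: "\<not> edge r [] x"
  by (simp add: edge_def)

lemma edge_Cons_One: "edge r (One i # u) x \<longleftrightarrow> valid r (One i # u) \<and> x = u"
  unfolding edge_def by (auto simp: Cons_eq_append_conv intro!: exI[of _ "[]"])

lemma edge_Two_Two:
  assumes "edge r u x"
  shows "edge r (Two # u) (Two # x)"
proof -
  have valid: "valid r (Two # u)"
    using assms by (simp add: edge_def valid_def)
  from assms consider
      (delete) u0 i w where "u = u0 @ One i # w" "set u0 \<subseteq> {Two}" "x = u0 @ w"
    | (replace) u0 w i where "u = u0 @ Two # w" "set u0 \<subseteq> {Two}" "1 \<le> i" "i \<le> r"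
        "x = u0 @ One i # w"
    unfolding edge_def by blast
  then show ?thesis
  proof cases
    case delete
    with valid show ?thesis unfolding edge_def
      by (intro conjI disjI1 exI[of _ "Two # u0"] exI[of _ i] exI[of _ w]) auto
  next
    case replace
    with valid show ?thesis unfolding edge_def
      by (intro conjI disjI2 exI[of _ "Two # u0"] exI[of _ w] exI[of _ i]) auto
  qed
qed

lemma edge_Two_One: "valid r u \<Longrightarrow> i \<in> {1..r} \<Longrightarrow> edge r (Two # u) (One i # u)"
  unfolding edge_def
  by (intro conjI disjI2 exI[of _ "[]"] exI[of _ u] exI[of _ i]) (auto simp: valid_def)

lemma edge_Cons_Two:
  "edge r (Two # u) x \<longleftrightarrow>
     valid r u \<and> ((\<exists>i \<in> {1..r}. x = One i # u) \<or> (\<exists>x'. x = Two # x' \<and> edge r u x'))"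
proof
  show "edge r (Two # u) x \<Longrightarrow>
     valid r u \<and> ((\<exists>i \<in> {1..r}. x = One i # u) \<or> (\<exists>x'. x = Two # x' \<and> edge r u x'))"
    unfolding edge_def by (auto simp: Cons_eq_append_conv valid_def; blast)
qed (auto intro: edge_Two_Two edge_Two_One)

lemma edge_successors_Two:
  "valid r u \<Longrightarrow>
     {x. edge r (Two # u) x} = (\<lambda>i. One i # u) ` {1..r} \<union> Cons Two ` {x. edge r u x}"
  by (auto simp: edge_Cons_Two)

lemma finite_edge_successors: "finite {x. edge r y x}"
proof (induction y)
  case (Cons a u)
  show ?case
  proof (cases a)
    case (One i)
    then have "{x. edge r (a # u) x} \<subseteq> {u}" by (auto simp: edge_Cons_One)
    then show ?thesis by (rule finite_subset) simp
  next
    case Two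
    then have "{x. edge r (a # u) x} \<subseteq> (\<lambda>i. One i # u) ` {1..r} \<union> Cons Two ` {x. edge r u x}"
      by (auto simp: edge_Cons_Two)
    then show ?thesis by (rule finite_subset) (simp add: Cons.IH)
  qed
qed simp

interpretation YF: graded_relation "edge r" rank for r
  by unfold_locales (simp_all add: edge_rank finite_edge_successors)

lemma dpaths_eq_card_down_paths: "dpaths r x y = card (down_paths (edge r) x y)"
  unfolding dpaths_def down_paths_def
  by (rule arg_cong[of _ _ card]) (auto dest: YF.rk_successively)

fun hooks :: "letter list \<Rightarrow> nat list" where
  "hooks [] = []"
| "hooks (One i # w) = hooks w"
| "hooks (Two # w) = Suc (rank w) # hooks w"

lemma sum_edge_successors_hooks:
  assumes "valid r y" and "y \<noteq> []"
  shows "(\<Sum>x | edge r y x. r ^ ntwo x * prod_list (hooks x)) = r ^ ntwo y * prod_list (hooks y)"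
proof -
  define f where "f x = r ^ ntwo x * prod_list (hooks x)" for x
  have "(\<Sum>x | edge r y x. f x) = f y" if "valid r y" "y \<noteq> []" for y
    using that
  proof (induction y)
    case (Cons a u)
    show ?case
    proof (cases a)
      case (One i)
      with Cons.prems have "{x. edge r (a # u) x} = {u}" by (auto simp: edge_Cons_One)
      with One show ?thesis by (simp add: f_def)
    next
      case Two
      have "valid r u" using Cons.prems Two by simp
      have sum_u: "rank u * (\<Sum>x | edge r u x. f x) = rank u * f u"
        using Cons.IH \<open>valid r u\<close> by (cases "u = []") auto
      have f_Two: "f (Two # x) = r * rank u * f x" if "edge r u x" for x
        using edge_rank[OF that] by (simp add: f_def algebra_simps)
      have "(\<Sum>x | edge r (a # u) x. f x)
          = (\<Sum>i \<in> {1..r}. f (One i # u)) + (\<Sum>x | edge r u x. f (Two # x))"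
        unfolding Two edge_successors_Two[OF \<open>valid r u\<close>]
        by (subst sum.union_disjoint) (auto simp: finite_edge_successors sum.reindex inj_on_def)
      also have "(\<Sum>i \<in> {1..r}. f (One i # u)) = r * f u"
        by (simp add: f_def)
      also have "(\<Sum>x | edge r u x. f (Two # x)) = r * rank u * (\<Sum>x | edge r u x. f x)"
        unfolding sum_distrib_left by (rule sum.cong) (simp_all add: f_Two)
      also have "r * f u + r * rank u * (\<Sum>x | edge r u x. f x) = f (a # u)"
        unfolding mult.assoc sum_u by (simp add: Two f_def algebra_simps)
      finally show ?thesis .
    qed
  qed simp
  with assms show ?thesis by (simp add: f_def)
qed

lemma dpaths_Nil_eq_hooks: "valid r y \<Longrightarrow> dpaths r [] y = r ^ ntwo y * prod_list (hooks y)"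
  unfolding dpaths_eq_card_down_paths
  by (rule YF.card_down_paths_eqI[where P = "valid r"])
    (auto simp: sum_edge_successors_hooks edge_valid)

lemma hooks_snoc_Two: "hooks (y @ [Two]) = map (\<lambda>h. h + 2) (hooks y) @ [1]"
  by (induction y rule: hooks.induct) auto

lemma hooks_snoc_One: "hooks (y @ [One i]) = map Suc (hooks y)"
  by (induction y rule: hooks.induct) auto

lemma blocks_ne_Nil: "blocks w \<noteq> []"
  by (induction w rule: blocks.induct) auto

lemma beta_snoc_Two: "beta (y @ [Two]) 0 = 0" "beta (y @ [Two]) (Suc k) = beta y k"
  by (simp_all add: beta_def)

lemma beta_snoc_One:
  "beta (y @ [One i]) 0 = Suc (beta y 0)" "beta (y @ [One i]) (Suc k) = beta y (Suc k)"
  using blocks_ne_Nil[of "rev y"] by (auto simp: beta_def hd_conv_nth neq_Nil_conv)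

lemma g_snoc_Two:
  "g (y @ [Two]) (Suc 0) = 1" "0 < j \<Longrightarrow> g (y @ [Two]) (Suc j) = g y j + 2"
  by (simp_all add: g_def sum.lessThan_Suc_shift beta_snoc_Two del: sum.lessThan_Suc)

lemma g_snoc_One: "0 < j \<Longrightarrow> g (y @ [One i]) j = Suc (g y j)"
  by (cases j) (simp_all add: g_def sum.lessThan_Suc_shift beta_snoc_One del: sum.lessThan_Suc)

lemma map_g_eq_rev_hooks: "map (g v) [1..<Suc (ntwo v)] = rev (hooks v)"
proof (induction v rule: rev_induct)
  case (snoc a y)
  show ?case
  proof (cases a)
    case (One i)
    have "map (g (y @ [a])) [1..<Suc (ntwo (y @ [a]))]
        = map Suc (map (g y) [1..<Suc (ntwo y)])"
      unfolding One map_map by (auto simp: g_snoc_One)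
    also have "\<dots> = rev (hooks (y @ [a]))"
      unfolding snoc.IH by (simp add: One hooks_snoc_One rev_map)
    finally show ?thesis .
  next
    case Two
    have "map (g (y @ [a])) [1..<Suc (ntwo (y @ [a]))]
        = 1 # map (\<lambda>h. h + 2) (map (g y) [1..<Suc (ntwo y)])"
      by (simp add: Two g_snoc_Two upt_conv_Cons map_Suc_upt[symmetric] del: upt_Suc)
    also have "\<dots> = rev (hooks (y @ [a]))"
      unfolding snoc.IH by (simp add: Two hooks_snoc_Two rev_map)
    finally show ?thesis .
  qed
qed simp

lemma prod_g_eq_prod_hooks: "(\<Prod>j = 1..ntwo v. g v j) = prod_list (hooks v)"
proof -
  have "(\<Prod>j = 1..ntwo v. g v j) = prod_list (map (g v) [1..<Suc (ntwo v)])"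
    using prod.distinct_set_conv_list[of "[1..<Suc (ntwo v)]" "g v"]
    by (simp add: atLeastLessThanSuc_atLeastAtMost del: upt_Suc)
  also have "\<dots> = prod_list (rev (hooks v))"
    by (simp only: map_g_eq_rev_hooks)
  finally show ?thesis by simp
qed

lemma valid_one_s: "valid 1 (s w)"
  by (induction w rule: hooks.induct) auto

lemma ntwo_s [simp]: "ntwo (s w) = ntwo w"
  by (induction w rule: hooks.induct) auto

lemma rank_s [simp]: "rank (s w) = rank w"
  by (induction w rule: hooks.induct) auto

lemma hooks_s [simp]: "hooks (s w) = hooks w"
  by (induction w rule: hooks.induct) auto

theorem mainTheorem4:
  fixes r :: nat and v :: "letter list"
  assumes "r \<ge> 1" and "valid r v"
  shows "dpaths r [] v = dpaths 1 [] (s v) * r ^ ntwo v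
       \<and> dpaths 1 [] (s v) * r ^ ntwo v = r ^ ntwo v * (\<Prod>j=1..ntwo v. g v j)"
proof -
  \<comment> \<open>the counting formula holds for every \<open>r\<close>\<close>
  have "dpaths r [] v = r ^ ntwo v * prod_list (hooks v)"
    using assms(2) by (rule dpaths_Nil_eq_hooks)
  moreover have "dpaths 1 [] (s v) = prod_list (hooks v)"
    using dpaths_Nil_eq_hooks[OF valid_one_s, of v] by simp
  moreover have "(\<Prod>j = 1..ntwo v. g v j) = prod_list (hooks v)"
    by (rule prod_g_eq_prod_hooks)
  ultimately show ?thesis by simp
qed

end
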